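(* For fixed $x,z\in\mathbb{R}$, $$\lim_{n\to+\infty}n(2\ln n)^{-1/2}D_n\big((1+z/\ln n)G_n(x)/2\big)=e^{c_0-x-2z},$$ where $G_n(x)=\dfrac{8x-5\ln(2\ln n)}{2n(2\ln n)^{1/2}}+\dfrac{(32\ln n)^{1/2}}{n}$.
   Context: For $\alpha\in(0,\pi)$ let $D_n(\alpha)=\det_{1\le j,l\le n}\left(\frac{1}{2\pi}\int_\alpha^{2\pi-\alpha}e^{i(j-l)\theta}\,d\theta\right)$ (the probability that a Haar unitary $n\times n$ matrix has no eigenvalue on a given arc of length $2\alpha$). By a result of Deift–Its–Krasovsky–Zhou there are constants $c_0\in\mathbb{R}$ and $s_0>0$ such that for every $\varepsilon>0$, uniformly in $s_0/n<\alpha<\pi-\varepsilon$, $$\ln D_n(\alpha)=n^2\ln\cos\frac{\alpha}{2}-\frac14\ln\Big(n\sin\frac{\alpha}{2}\Big)+c_0+O\Big(\frac{1}{n\sin(\alpha/2)}\Big).$$ $c_0$ denotes this constant. *)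

theory Defs
  imports "HOL-Analysis.Analysis" "Jordan_Normal_Form.Determinant"
begin

definition arc_toeplitz :: "nat \<Rightarrow> real \<Rightarrow> complex mat" where
  "arc_toeplitz n \<alpha> = mat n n (\<lambda>(j, l).
      complex_of_real (1 / (2 * pi)) *
      integral {\<alpha> .. 2 * pi - \<alpha>}
        (\<lambda>\<theta>. exp (\<i> * complex_of_real (real_of_int (int j - int l) * \<theta>))))"

text \<open>D_n(alpha): the determinant (a Hermitian matrix, so the determinant is real).\<close>
definition D :: "nat \<Rightarrow> real \<Rightarrow> real" where
  "D n \<alpha> = Re (det (arc_toeplitz n \<alpha>))"

definition G :: "nat \<Rightarrow> real \<Rightarrow> real" where
  "G n x = (8 * x - 5 * ln (2 * ln (real n))) / (2 * real n * sqrt (2 * ln (real n)))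
           + sqrt (32 * ln (real n)) / real n"

end

(*
  With s = sqrt (2 ln n), so that n = exp (s^2/2), the arc alpha_n = (1 + z / ln n) G_n(x) / 2
  satisfies n alpha_n / 2 = (1 + 2z/s^2) (s + (4x - 5 ln s) / (4s)); hence n alpha_n tends to
  infinity while n alpha_n^2 tends to 0. In this regime ln cos (alpha/2) = -alpha^2/8 + O(alpha^4)
  and sin (alpha/2) ~ alpha/2 reduce the Deift-Its-Krasovsky-Zhou expansion to
  ln D_n(alpha_n) = -(n alpha_n)^2/8 - (1/4) ln (n alpha_n / 2) + c0 + o(1), and inserting the
  explicit arc gives ln (n s^-1 D_n(alpha_n)) --> c0 - x - 2z.

  Passing from the logarithm back to D_n requires D_n >= 0, since ln x = ln |x| for real x.
  The Toeplitz matrix T has quadratic form (1/2pi) times the integral of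
  |sum_l v_l exp(-i l theta)|^2 over the arc, so it is Hermitian positive semidefinite; along
  (1 - t) I + t T the determinant stays real and, for t < 1, nonzero, so by the intermediate
  value theorem det T cannot be negative.
*)
theory Submission
  imports Defs "HOL-Real_Asymp.Real_Asymp"
begin

lemma det_map_mat_cnj: "det (map_mat cnj A) = cnj (det (A :: complex mat))"
  unfolding det_def by (auto simp: sign_def)

lemma det_real_if_hermitian:
  fixes A :: "complex mat"
  assumes A: "A \<in> carrier_mat n n" and herm: "map_mat cnj A = transpose_mat A"
  shows "det A \<in> \<real>"
proof -
  have "cnj (det A) = det (transpose_mat A)"
    by (simp only: det_map_mat_cnj[symmetric] herm)
  also have "\<dots> = det A" by (rule det_transpose[OF A])
  finally show ?thesis by (simp add: Reals_cnj_iff)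
qed

lemma quadratic_form_convex_comb:
  fixes A :: "complex mat"
  assumes A: "A \<in> carrier_mat n n" and v: "v \<in> carrier_vec n"
  shows "((of_real (1 - t) \<cdot>\<^sub>m 1\<^sub>m n + of_real t \<cdot>\<^sub>m A) *\<^sub>v v) \<bullet>c v
       = of_real (1 - t) * (v \<bullet>c v) + of_real t * ((A *\<^sub>v v) \<bullet>c v)"
proof -
  have smult: "(c \<cdot>\<^sub>m B) *\<^sub>v v = c \<cdot>\<^sub>v (B *\<^sub>v v)"
    if "B \<in> carrier_mat n n" for c and B :: "complex mat"
    using that v by (intro eq_vecI) (auto simp: scalar_prod_def sum_distrib_left mult.assoc)
  have "(of_real (1 - t) \<cdot>\<^sub>m 1\<^sub>m n + of_real t \<cdot>\<^sub>m A) *\<^sub>v v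
      = of_real (1 - t) \<cdot>\<^sub>v v + of_real t \<cdot>\<^sub>v (A *\<^sub>v v)"
    using A v by (simp add: add_mult_distrib_mat_vec[of _ n n] smult)
  then show ?thesis
    using A v by (simp add: add_scalar_prod_distrib[of _ n])
qed

lemma det_nonneg_if_psd:
  fixes A :: "complex mat"
  assumes A: "A \<in> carrier_mat n n" and herm: "map_mat cnj A = transpose_mat A"
    and psd: "\<And>v. v \<in> carrier_vec n \<Longrightarrow> (A *\<^sub>v v) \<bullet>c v \<ge> 0"
  shows "det A \<ge> 0"
proof -
  define B where "B t = of_real (1 - t) \<cdot>\<^sub>m 1\<^sub>m n + of_real t \<cdot>\<^sub>m A" for t
  have B_carrier: "B t \<in> carrier_mat n n" for t
    using A by (simp add: B_def)
  have B_entry: "B t $$ (i, j) = of_real (1 - t) * (if i = j then 1 else 0) + of_real t * A $$ (i, j)"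
    if "i < n" "j < n" for t i j
    using A that by (simp add: B_def)
  have A_entry: "cnj (A $$ (i, j)) = A $$ (j, i)" if "i < n" "j < n" for i j
    using arg_cong[OF herm, of "\<lambda>M. M $$ (i, j)"] A that by simp
  have B_real: "det (B t) \<in> \<real>" for t
    by (rule det_real_if_hermitian[OF B_carrier])
       (use B_carrier[of t] in \<open>auto intro!: eq_matI simp: B_entry A_entry\<close>)
  have B_nonsingular: "det (B t) \<noteq> 0" if t: "0 \<le> t" "t < 1" for t
  proof
    assume "det (B t) = 0"
    then obtain v where v: "v \<in> carrier_vec n" "v \<noteq> 0\<^sub>v n" "B t *\<^sub>v v = 0\<^sub>v n"
      using det_0_iff_vec_prod_zero[OF B_carrier] by blast
    have "0 = Re ((B t *\<^sub>v v) \<bullet>c v)"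
      using v by simp
    also have "\<dots> = (1 - t) * Re (v \<bullet>c v) + t * Re ((A *\<^sub>v v) \<bullet>c v)"
      unfolding B_def quadratic_form_convex_comb[OF A v(1)] by simp
    also have "\<dots> > 0"
      using v t psd[OF v(1)] conjugate_square_greater_0_vec[OF v(1)]
      by (intro add_pos_nonneg mult_pos_pos mult_nonneg_nonneg)
         (auto simp: less_eq_complex_def less_complex_def)
    finally show False by simp
  qed
  have cont: "continuous_on {0..1} (\<lambda>t. Re (det (B t)))"
  proof -
    have "det (B t) = (\<Sum>p \<in> {p. p permutes {0..<n}}. signof p *
        (\<Prod>i = 0..<n. of_real (1 - t) * (if i = p i then 1 else 0) + of_real t * A $$ (i, p i)))" for t
      unfolding det_def'[OF B_carrier]
      by (intro sum.cong refl arg_cong[where f = "\<lambda>x. signof _ * x"] prod.cong)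
         (auto simp: B_entry permutes_in_image)
    then show ?thesis by (simp only:) (intro continuous_intros)
  qed
  have B0: "B 0 = 1\<^sub>m n" and B1: "B 1 = A"
    using A by (auto intro!: eq_matI simp: B_def)
  show ?thesis
  proof (rule ccontr)
    assume "\<not> det A \<ge> 0"
    with B_real[of 1] have neg: "Re (det (B 1)) < 0"
      by (auto simp: B1 less_eq_complex_def complex_is_Real_iff)
    then obtain t where t: "0 \<le> t" "t \<le> 1" "Re (det (B t)) = 0"
      using IVT2'[of "\<lambda>t. Re (det (B t))" 1 0 0] cont by (auto simp: B0)
    with neg have "t < 1"
      by (cases "t = 1") auto
    with t B_real[of t] B_nonsingular[of t] show False
      by (simp add: complex_is_Real_iff complex_eq_iff)
  qed
qed

lemma arc_toeplitz_hermitian: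
  "map_mat cnj (arc_toeplitz n \<alpha>) = transpose_mat (arc_toeplitz n \<alpha>)"
proof (rule eq_matI)
  fix j l
  assume "j < dim_row (transpose_mat (arc_toeplitz n \<alpha>))"
    and "l < dim_col (transpose_mat (arc_toeplitz n \<alpha>))"
  then show "map_mat cnj (arc_toeplitz n \<alpha>) $$ (j, l) = transpose_mat (arc_toeplitz n \<alpha>) $$ (j, l)"
    by (simp add: arc_toeplitz_def integral_cnj exp_cnj algebra_simps)
qed (simp_all add: arc_toeplitz_def)

lemma arc_toeplitz_quadratic_form:
  fixes v :: "complex vec"
  assumes v: "v \<in> carrier_vec n"
  shows "(arc_toeplitz n \<alpha> *\<^sub>v v) \<bullet>c v = of_real (1 / (2 * pi) *
           integral {\<alpha> .. 2 * pi - \<alpha>} (\<lambda>\<theta>. (cmod (\<Sum>l<n. v $ l * exp (- \<i> * of_real (real l * \<theta>))))\<^sup>2))"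
proof -
  define I where "I = {\<alpha> .. 2 * pi - \<alpha>}"
  define e where "e j l \<theta> = exp (\<i> * complex_of_real (real_of_int (int j - int l) * \<theta>))" for j l :: nat and \<theta>
  define S where "S \<theta> = (\<Sum>l<n. v $ l * exp (- \<i> * of_real (real l * \<theta>)))" for \<theta>
  have e_integrable: "(\<lambda>\<theta>. c * e j l \<theta>) integrable_on I" for j l c
    unfolding I_def e_def by (intro integrable_continuous_interval continuous_intros)
  have S_integrable: "(\<lambda>\<theta>. (cmod (S \<theta>))\<^sup>2) integrable_on I"
    unfolding I_def S_def by (intro integrable_continuous_interval continuous_intros)
  have S_square: "(\<Sum>j<n. \<Sum>l<n. cnj (v $ j) * v $ l * e j l \<theta>) = of_real ((cmod (S \<theta>))\<^sup>2)" for \<theta>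
  proof -
    have "cnj (exp (- \<i> * of_real (real j * \<theta>))) * exp (- \<i> * of_real (real l * \<theta>)) = e j l \<theta>" for j l
      unfolding e_def exp_cnj exp_add[symmetric] by (simp add: algebra_simps)
    then have "cnj (S \<theta>) * S \<theta> = (\<Sum>j<n. \<Sum>l<n. cnj (v $ j) * v $ l * e j l \<theta>)"
      unfolding S_def cnj_sum sum_product by (intro sum.cong refl) (simp add: algebra_simps)
    then show ?thesis
      by (metis complex_norm_square mult.commute)
  qed
  have "(arc_toeplitz n \<alpha> *\<^sub>v v) \<bullet>c v = (\<Sum>j<n. \<Sum>l<n. cnj (v $ j) * arc_toeplitz n \<alpha> $$ (j, l) * v $ l)"
    using v by (simp add: scalar_prod_def arc_toeplitz_def sum_distrib_left lessThan_atLeast0 algebra_simps)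
  also have "\<dots> = of_real (1 / (2 * pi)) * (\<Sum>j<n. \<Sum>l<n. integral I (\<lambda>\<theta>. cnj (v $ j) * v $ l * e j l \<theta>))"
    unfolding sum_distrib_left
    by (intro sum.cong refl) (simp add: arc_toeplitz_def I_def e_def integral_mult_right algebra_simps)
  also have "\<dots> = of_real (1 / (2 * pi)) * integral I (\<lambda>\<theta>. \<Sum>j<n. \<Sum>l<n. cnj (v $ j) * v $ l * e j l \<theta>)"
    by (simp add: integral_sum integrable_sum e_integrable)
  also have "\<dots> = of_real (1 / (2 * pi)) * of_real (integral I (\<lambda>\<theta>. (cmod (S \<theta>))\<^sup>2))"
    unfolding S_square by (metis integral_unique has_integral_of_real[OF integrable_integral[OF S_integrable]])
  finally show ?thesis
    by (simp add: I_def S_def)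
qed

lemma arc_toeplitz_carrier: "arc_toeplitz n \<alpha> \<in> carrier_mat n n"
  by (simp add: arc_toeplitz_def)

lemma arc_toeplitz_psd:
  assumes "v \<in> carrier_vec n"
  shows "(arc_toeplitz n \<alpha> *\<^sub>v v) \<bullet>c v \<ge> 0"
  unfolding arc_toeplitz_quadratic_form[OF assms] less_eq_complex_def
  by (simp add: integral_nonneg integrable_continuous_interval continuous_intros)

lemma D_nonneg: "D n \<alpha> \<ge> 0"
proof -
  have "det (arc_toeplitz n \<alpha>) \<ge> 0"
    by (rule det_nonneg_if_psd[OF arc_toeplitz_carrier arc_toeplitz_hermitian arc_toeplitz_psd])
  then show ?thesis
    by (simp add: D_def less_eq_complex_def)
qed

definition DIKZ_expansion :: "real \<Rightarrow> real \<Rightarrow> bool" where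
  "DIKZ_expansion c0 s0 \<longleftrightarrow> (\<forall>\<epsilon>>0. \<exists>C N. \<forall>n\<ge>N. \<forall>\<alpha>. s0 / real n < \<alpha> \<and> \<alpha> < pi - \<epsilon> \<longrightarrow>
        \<bar>ln (D n \<alpha>) - ((real n)\<^sup>2 * ln (cos (\<alpha> / 2)) - 1/4 * ln (real n * sin (\<alpha> / 2)) + c0)\<bar>
          \<le> C / (real n * sin (\<alpha> / 2)))"

lemma DIKZ_error_vanishes:
  assumes "DIKZ_expansion c0 s0"
    and alpha: "(\<alpha> \<longlongrightarrow> 0) sequentially"
    and n_alpha: "filterlim (\<lambda>n. real n * \<alpha> n) at_top sequentially"
  shows "((\<lambda>n. ln (D n (\<alpha> n)) - ((real n)\<^sup>2 * ln (cos (\<alpha> n / 2)) - 1/4 * ln (real n * sin (\<alpha> n / 2)) + c0))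
           \<longlongrightarrow> 0) sequentially"
proof -
  obtain C N where CN: "\<forall>n\<ge>N. \<forall>\<alpha>. s0 / real n < \<alpha> \<and> \<alpha> < pi - 1 \<longrightarrow>
        \<bar>ln (D n \<alpha>) - ((real n)\<^sup>2 * ln (cos (\<alpha> / 2)) - 1/4 * ln (real n * sin (\<alpha> / 2)) + c0)\<bar>
          \<le> C / (real n * sin (\<alpha> / 2))"
    using assms(1) unfolding DIKZ_expansion_def by (auto dest: spec[of _ 1])
  have small: "eventually (\<lambda>n. \<alpha> n < 1) sequentially"
    using alpha by (rule order_tendstoD) simp
  have large: "eventually (\<lambda>n. real n * \<alpha> n > max s0 0) sequentially"
    using n_alpha unfolding filterlim_at_top_dense by blast
  have bound: "eventually (\<lambda>n. norm (ln (D n (\<alpha> n)) - ((real n)\<^sup>2 * ln (cos (\<alpha> n / 2))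
      - 1/4 * ln (real n * sin (\<alpha> n / 2)) + c0)) \<le> C / (real n * sin (\<alpha> n / 2))) sequentially"
    using eventually_ge_at_top[of "max N 1"] small large
  proof eventually_elim
    case (elim n)
    then have "s0 / real n < \<alpha> n" "\<alpha> n < pi - 1"
      using pi_gt3 by (auto simp: field_simps)
    with CN elim show ?case by auto
  qed
  have half_alpha: "filterlim (\<lambda>n. \<alpha> n / 2) (at 0) sequentially"
    using alpha large
    by (auto intro!: filterlim_atI tendsto_eq_intros elim: eventually_mono simp: zero_less_mult_iff)
  have "((\<lambda>n. sin (\<alpha> n / 2) / (\<alpha> n / 2)) \<longlongrightarrow> 1) sequentially"
    by (rule filterlim_compose[OF _ half_alpha]) real_asymp
  then have "filterlim (\<lambda>n. sin (\<alpha> n / 2) / (\<alpha> n / 2) / 2 * (real n * \<alpha> n)) at_top sequentially"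
    by (rule filterlim_tendsto_pos_mult_at_top[OF tendsto_divide[OF _ tendsto_const] _ n_alpha]) simp_all
  then have "((\<lambda>n. C / (sin (\<alpha> n / 2) / (\<alpha> n / 2) / 2 * (real n * \<alpha> n))) \<longlongrightarrow> 0) sequentially"
    by (intro tendsto_divide_0[OF tendsto_const] filterlim_at_top_imp_at_infinity)
  then have "((\<lambda>n. C / (real n * sin (\<alpha> n / 2))) \<longlongrightarrow> 0) sequentially"
    by (rule Lim_transform_eventually)
       (use large in \<open>eventually_elim, auto simp: field_simps\<close>)
  with bound show ?thesis
    by (rule Lim_null_comparison)
qed

lemma DIKZ_main_term_small_arcs:
  fixes \<alpha> :: "nat \<Rightarrow> real"
  assumes alpha: "filterlim \<alpha> (at_right 0) sequentially"
    and n_alpha_sq: "((\<lambda>n. real n * (\<alpha> n)\<^sup>2) \<longlongrightarrow> 0) sequentially"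
  shows "((\<lambda>n. (real n)\<^sup>2 * ln (cos (\<alpha> n / 2)) - 1/4 * ln (real n * sin (\<alpha> n / 2))
             + (real n * \<alpha> n)\<^sup>2 / 8 + ln (real n * \<alpha> n / 2) / 4) \<longlongrightarrow> 0) sequentially"
proof -
  have "eventually (\<lambda>n. \<alpha> n > 0) sequentially" "(\<alpha> \<longlongrightarrow> 0) sequentially"
    using alpha by (auto simp: filterlim_at elim: eventually_mono)
  then have alpha_small: "eventually (\<lambda>n. 0 < \<alpha> n \<and> \<alpha> n < 1) sequentially"
    by (intro eventually_conj) (auto dest: order_tendstoD(2)[of _ 0 _ 1])
  have quartic: "((\<lambda>n. (ln (cos (\<alpha> n / 2)) + (\<alpha> n)\<^sup>2 / 8) / (\<alpha> n)^4) \<longlongrightarrow> -1/192) sequentially"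
    by (rule filterlim_compose[OF _ alpha]) real_asymp
  have cos_part: "((\<lambda>n. (real n)\<^sup>2 * (ln (cos (\<alpha> n / 2)) + (\<alpha> n)\<^sup>2 / 8)) \<longlongrightarrow> 0) sequentially"
  proof (rule Lim_transform_eventually)
    show "((\<lambda>n. (ln (cos (\<alpha> n / 2)) + (\<alpha> n)\<^sup>2 / 8) / (\<alpha> n)^4 * (real n * (\<alpha> n)\<^sup>2)\<^sup>2) \<longlongrightarrow> 0) sequentially"
      using tendsto_mult[OF quartic tendsto_power[OF n_alpha_sq, of 2]] by simp
    show "eventually (\<lambda>n. (ln (cos (\<alpha> n / 2)) + (\<alpha> n)\<^sup>2 / 8) / (\<alpha> n)^4 * (real n * (\<alpha> n)\<^sup>2)\<^sup>2
        = (real n)\<^sup>2 * (ln (cos (\<alpha> n / 2)) + (\<alpha> n)\<^sup>2 / 8)) sequentially"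
      using alpha_small by eventually_elim (simp add: power_mult_distrib flip: power_mult)
  qed
  have sin_part: "((\<lambda>n. ln (sin (\<alpha> n / 2) / (\<alpha> n / 2))) \<longlongrightarrow> 0) sequentially"
    by (rule filterlim_compose[OF _ alpha]) real_asymp
  have "eventually (\<lambda>n. (real n)\<^sup>2 * (ln (cos (\<alpha> n / 2)) + (\<alpha> n)\<^sup>2 / 8) - ln (sin (\<alpha> n / 2) / (\<alpha> n / 2)) / 4
      = (real n)\<^sup>2 * ln (cos (\<alpha> n / 2)) - 1/4 * ln (real n * sin (\<alpha> n / 2))
             + (real n * \<alpha> n)\<^sup>2 / 8 + ln (real n * \<alpha> n / 2) / 4) sequentially"
    using alpha_small eventually_gt_at_top[of 0]
  proof eventually_elim
    case (elim n)
    then have "sin (\<alpha> n / 2) > 0"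
      using pi_gt3 by (intro sin_gt_zero) auto
    moreover have "real n * sin (\<alpha> n / 2) = (real n * \<alpha> n / 2) * (sin (\<alpha> n / 2) / (\<alpha> n / 2))"
      using elim by simp
    ultimately have "ln (real n * sin (\<alpha> n / 2)) = ln (real n * \<alpha> n / 2) + ln (sin (\<alpha> n / 2) / (\<alpha> n / 2))"
      using elim by (simp only:) (intro ln_mult_pos; simp)
    then show ?case
      by (simp add: algebra_simps power2_eq_square)
  qed
  moreover have "((\<lambda>n. (real n)\<^sup>2 * (ln (cos (\<alpha> n / 2)) + (\<alpha> n)\<^sup>2 / 8)
      - ln (sin (\<alpha> n / 2) / (\<alpha> n / 2)) / 4) \<longlongrightarrow> 0) sequentially"
    using tendsto_diff[OF cos_part tendsto_divide[OF sin_part tendsto_const, of 4]] by simp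
  ultimately show ?thesis
    by (rule Lim_transform_eventually[rotated])
qed

lemma ln_D_small_arcs:
  fixes \<alpha> :: "nat \<Rightarrow> real"
  assumes DIKZ: "DIKZ_expansion c0 s0"
    and n_alpha: "filterlim (\<lambda>n. real n * \<alpha> n) at_top sequentially"
    and n_alpha_sq: "((\<lambda>n. real n * (\<alpha> n)\<^sup>2) \<longlongrightarrow> 0) sequentially"
  shows "((\<lambda>n. ln (D n (\<alpha> n)) + (real n * \<alpha> n)\<^sup>2 / 8 + ln (real n * \<alpha> n / 2) / 4) \<longlongrightarrow> c0) sequentially"
proof -
  have n_alpha_pos: "eventually (\<lambda>n. real n * \<alpha> n > 0) sequentially"
    using n_alpha unfolding filterlim_at_top_dense by blast
  have "((\<lambda>n. real n * (\<alpha> n)\<^sup>2 / (real n * \<alpha> n)) \<longlongrightarrow> 0) sequentially"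
    by (rule tendsto_divide_0[OF n_alpha_sq filterlim_at_top_imp_at_infinity[OF n_alpha]])
  then have "(\<alpha> \<longlongrightarrow> 0) sequentially"
    by (rule Lim_transform_eventually)
       (use n_alpha_pos in \<open>eventually_elim, auto simp: power2_eq_square zero_less_mult_iff\<close>)
  moreover have "eventually (\<lambda>n. \<alpha> n > 0) sequentially"
    using n_alpha_pos by eventually_elim (simp add: zero_less_mult_iff)
  ultimately have alpha: "filterlim \<alpha> (at_right 0) sequentially"
    by (rule tendsto_imp_filterlim_at_right)
  have "((\<lambda>n. (ln (D n (\<alpha> n)) - ((real n)\<^sup>2 * ln (cos (\<alpha> n / 2)) - 1/4 * ln (real n * sin (\<alpha> n / 2)) + c0))
      + ((real n)\<^sup>2 * ln (cos (\<alpha> n / 2)) - 1/4 * ln (real n * sin (\<alpha> n / 2))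
         + (real n * \<alpha> n)\<^sup>2 / 8 + ln (real n * \<alpha> n / 2) / 4) + c0) \<longlongrightarrow> 0 + 0 + c0) sequentially"
    using alpha by (intro tendsto_add tendsto_const DIKZ_error_vanishes[OF DIKZ _ n_alpha]
        DIKZ_main_term_small_arcs[OF alpha n_alpha_sq]) (simp add: filterlim_at)
  then show ?thesis
    by (simp add: add.assoc)
qed

lemma tendsto_exp_mult_of_tendsto_ln:
  fixes f g :: "'a \<Rightarrow> real"
  assumes f_nonneg: "\<And>x. f x \<ge> 0"
    and g: "filterlim g at_top F"
    and lim: "((\<lambda>x. g x + ln (f x)) \<longlongrightarrow> L) F"
  shows "((\<lambda>x. exp (g x) * f x) \<longlongrightarrow> exp L) F"
proof (rule Lim_transform_eventually)
  show "((\<lambda>x. exp (g x + ln (f x))) \<longlongrightarrow> exp L) F"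
    by (intro tendsto_exp lim)
  \<comment> \<open>Since ln 0 = 0, only the divergence of ln (f x) to minus infinity rules out zeros of f.\<close>
  have "eventually (\<lambda>x. g x + ln (f x) < L + 1) F" "eventually (\<lambda>x. g x > L + 1) F"
    using lim g by (auto intro: order_tendstoD simp: filterlim_at_top_dense)
  then show "eventually (\<lambda>x. exp (g x + ln (f x)) = exp (g x) * f x) F"
  proof eventually_elim
    case (elim x)
    then have "f x \<noteq> 0"
      by auto
    with f_nonneg[of x] show ?case
      by (simp add: exp_add)
  qed
qed

definition G_arc :: "real \<Rightarrow> real \<Rightarrow> nat \<Rightarrow> real" where
  "G_arc x z n = (1 + z / ln (real n)) * G n x / 2"

definition arc_scale :: "real \<Rightarrow> real \<Rightarrow> real \<Rightarrow> real" where
  "arc_scale x z s = (1 + 2 * z / s\<^sup>2) * (s + (4 * x - 5 * ln s) / (4 * s))"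

lemma n_G_arc_eq_arc_scale:
  assumes n: "n \<ge> 2"
  shows "real n * G_arc x z n / 2 = arc_scale x z (sqrt (2 * ln (real n)))"
proof -
  define s where "s = sqrt (2 * ln (real n))"
  have "ln (real n) > 0"
    using n by simp
  then have s_pos: "s > 0" and s_sq: "s\<^sup>2 = 2 * ln (real n)"
    by (simp_all add: s_def)
  have sqrt_32: "sqrt (32 * ln (real n)) = 4 * s"
    using real_sqrt_mult[of 16 "2 * ln (real n)"] by (simp add: s_def)
  have ln_ln: "ln (2 * ln (real n)) = 2 * ln s"
    using s_pos by (simp add: s_sq[symmetric] ln_realpow)
  have z_ln: "z / ln (real n) = 2 * z / s\<^sup>2"
    by (simp add: s_sq)
  show ?thesis
    using n s_pos unfolding G_arc_def G_def arc_scale_def s_def[symmetric] sqrt_32 ln_ln z_ln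
    by (simp add: field_simps)
qed

lemma sqrt_2_ln_at_top: "filterlim (\<lambda>n. sqrt (2 * ln (real n))) at_top sequentially"
proof -
  have "filterlim (\<lambda>r::real. sqrt (2 * ln r)) at_top at_top"
    by real_asymp
  then show ?thesis
    by (rule filterlim_compose[OF _ filterlim_real_sequentially])
qed

lemma arc_scale_at_top: "filterlim (arc_scale x z) at_top at_top"
  unfolding arc_scale_def by real_asymp

lemma arc_scale_sq_over_exp: "((\<lambda>s. (arc_scale x z s)\<^sup>2 / exp (s\<^sup>2 / 2)) \<longlongrightarrow> 0) at_top"
  unfolding arc_scale_def by real_asymp

lemma arc_scale_main_term:
  "((\<lambda>s. s\<^sup>2 / 2 - ln s - (arc_scale x z s)\<^sup>2 / 2 - ln (arc_scale x z s) / 4) \<longlongrightarrow> - x - 2 * z) at_top"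
proof -
  have "- x - 2 * z = - ((x * 2 + 4 * z) / 2)"
    by (simp add: field_simps)
  then show ?thesis
    unfolding arc_scale_def by (simp only:) real_asymp
qed

lemma n_G_arc_at_top: "filterlim (\<lambda>n. real n * G_arc x z n) at_top sequentially"
proof -
  have "filterlim (\<lambda>n. 2 * arc_scale x z (sqrt (2 * ln (real n)))) at_top sequentially"
    by (intro filterlim_tendsto_pos_mult_at_top[OF tendsto_const]
        filterlim_compose[OF arc_scale_at_top sqrt_2_ln_at_top]) simp
  then show ?thesis
    by (rule filterlim_mono_eventually[OF _ order_refl order_refl])
       (use eventually_ge_at_top[of 2] in \<open>eventually_elim, simp add: n_G_arc_eq_arc_scale[symmetric]\<close>)
qed

lemma n_G_arc_sq_tendsto_0: "((\<lambda>n. real n * (G_arc x z n)\<^sup>2) \<longlongrightarrow> 0) sequentially"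
proof (rule Lim_transform_eventually)
  show "((\<lambda>n. 4 * ((arc_scale x z (sqrt (2 * ln (real n))))\<^sup>2 / exp ((sqrt (2 * ln (real n)))\<^sup>2 / 2))) \<longlongrightarrow> 0) sequentially"
    using tendsto_mult_right_zero[OF filterlim_compose[OF arc_scale_sq_over_exp sqrt_2_ln_at_top]] .
  show "eventually (\<lambda>n. 4 * ((arc_scale x z (sqrt (2 * ln (real n))))\<^sup>2 / exp ((sqrt (2 * ln (real n)))\<^sup>2 / 2))
      = real n * (G_arc x z n)\<^sup>2) sequentially"
    using eventually_ge_at_top[of 2]
    by eventually_elim (simp add: n_G_arc_eq_arc_scale[symmetric] field_simps power2_eq_square)
qed

lemma G_arc_main_term:
  "((\<lambda>n. ln (real n) - ln (sqrt (2 * ln (real n))) - (real n * G_arc x z n)\<^sup>2 / 8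
      - ln (real n * G_arc x z n / 2) / 4) \<longlongrightarrow> - x - 2 * z) sequentially"
proof (rule Lim_transform_eventually)
  show "((\<lambda>n. (sqrt (2 * ln (real n)))\<^sup>2 / 2 - ln (sqrt (2 * ln (real n)))
      - (arc_scale x z (sqrt (2 * ln (real n))))\<^sup>2 / 2 - ln (arc_scale x z (sqrt (2 * ln (real n)))) / 4)
      \<longlongrightarrow> - x - 2 * z) sequentially"
    using filterlim_compose[OF arc_scale_main_term sqrt_2_ln_at_top] .
  show "eventually (\<lambda>n. (sqrt (2 * ln (real n)))\<^sup>2 / 2 - ln (sqrt (2 * ln (real n)))
      - (arc_scale x z (sqrt (2 * ln (real n))))\<^sup>2 / 2 - ln (arc_scale x z (sqrt (2 * ln (real n)))) / 4
      = ln (real n) - ln (sqrt (2 * ln (real n))) - (real n * G_arc x z n)\<^sup>2 / 8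
      - ln (real n * G_arc x z n / 2) / 4) sequentially"
    using eventually_ge_at_top[of 2]
    by eventually_elim (simp add: n_G_arc_eq_arc_scale[symmetric] power2_eq_square)
qed

theorem lemma8:
  fixes c0 s0 x z :: real
  assumes s0_pos: "s0 > 0"
    and DIK: "\<forall>\<epsilon>>0. \<exists>C N. \<forall>n\<ge>N. \<forall>\<alpha>. s0 / real n < \<alpha> \<and> \<alpha> < pi - \<epsilon> \<longrightarrow>
        \<bar>ln (D n \<alpha>) - ((real n)\<^sup>2 * ln (cos (\<alpha> / 2)) - 1/4 * ln (real n * sin (\<alpha> / 2)) + c0)\<bar>
          \<le> C / (real n * sin (\<alpha> / 2))"
  shows "(\<lambda>n. real n * (2 * ln (real n)) powr (-1/2) *
            D n ((1 + z / ln (real n)) * G n x / 2))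
         \<longlonglongrightarrow> exp (c0 - x - 2 * z)"
proof -
  have "DIKZ_expansion c0 s0"
    using DIK unfolding DIKZ_expansion_def .
  then have "((\<lambda>n. ln (D n (G_arc x z n)) + (real n * G_arc x z n)\<^sup>2 / 8 + ln (real n * G_arc x z n / 2) / 4)
      \<longlongrightarrow> c0) sequentially"
    by (rule ln_D_small_arcs[OF _ n_G_arc_at_top n_G_arc_sq_tendsto_0])
  from tendsto_add[OF G_arc_main_term[of x z] this]
  have "((\<lambda>n. (ln (real n) - ln (sqrt (2 * ln (real n)))) + ln (D n (G_arc x z n))) \<longlongrightarrow> c0 - x - 2 * z) sequentially"
    by (simp add: algebra_simps)
  moreover have "filterlim (\<lambda>n. ln (real n) - ln (sqrt (2 * ln (real n)))) at_top sequentially"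
    by (rule filterlim_compose[OF _ filterlim_real_sequentially]) real_asymp
  ultimately have "((\<lambda>n. exp (ln (real n) - ln (sqrt (2 * ln (real n)))) * D n (G_arc x z n)) \<longlongrightarrow> exp (c0 - x - 2 * z)) sequentially"
    by (intro tendsto_exp_mult_of_tendsto_ln D_nonneg)
  then show ?thesis
  proof (rule Lim_transform_eventually)
    show "eventually (\<lambda>n. exp (ln (real n) - ln (sqrt (2 * ln (real n)))) * D n (G_arc x z n)
        = real n * (2 * ln (real n)) powr (-1/2) * D n ((1 + z / ln (real n)) * G n x / 2)) sequentially"
      using eventually_ge_at_top[of 2]
      by eventually_elim (simp add: G_arc_def exp_diff powr_minus_divide powr_half_sqrt)
  qed
qed

end
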